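(* Any parallel MTTKRP algorithm on $P$ processors, each with local memory of size $M$, in which the $IR$ $N$-ary multiplies are distributed among the processors, involves some processor performing at least \[ \frac{1}{3^{2-1/N}}\,\frac{N I R}{P\,M^{1-1/N}} - M \] sends and receives.
   Context: MTTKRP: Fix integers $N\ge 2$, $I_1,\dots,I_N\ge1$, $R\ge1$, and a mode $n\in[N]$; let $I=I_1I_2\cdots I_N$. Inputs are an $N$-way tensor $\mathcal{X}$ of dimensions $I_1\times\cdots\times I_N$ and matrices $A^{(k)}$ of size $I_k\times R$ for $k\in[N]\setminus\{n\}$; the output is the $I_n\times R$ matrix $B^{(n)}$ with $B^{(n)}(i_n,r)=\sum \mathcal{X}(i_1,\dots,i_N)\prod_{k\ne n}A^{(k)}(i_k,r)$, the sum over all $(i_1,\dots,i_N)$ with $n$-th entry $i_n$; values come from an arbitrary set with two binary operations (no algebraic laws assumed). Each point of the iteration space $[I_1]\times\cdots\times[I_N]\times[R]$ corresponds to one atomic $N$-ary multiply, which must be performed by some processor, and the products are accumulated by binary additions. Parallel model: $P$ processors, each with a local memory holding at most $M$ values, connected by a network; a processor operates only on values in its local memory; communication consists of sends and receives of individual values. *)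

theory Defs
  imports Complex_Main "HOL-Library.Multiset"
begin

text \<open>Symbolic (free-term) model of values: since no algebraic laws are assumed,
a value is identified with the expression that produced it.
Indices are 0-based: a multi-index is a list i of length N with i!k < dims!k,
modes are 0..N-1, columns are 0..R-1.\<close>

datatype val =
    XIn "nat list"
  | AIn nat nat nat           \<comment> \<open>AIn k i r = factor entry A^(k)(i,r)\<close>
  | Prod "nat list" nat       \<comment> \<open>result of the N-ary multiply at iteration point (i,r)\<close>
  | Plus val val

fun is_input :: "val \<Rightarrow> bool" where
  "is_input (XIn _) = True"
| "is_input (AIn _ _ _) = True"
| "is_input _ = False"

fun pure_sum :: "val \<Rightarrow> bool" where
  "pure_sum (Prod _ _) = True"
| "pure_sum (Plus a b) = (pure_sum a \<and> pure_sum b)"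
| "pure_sum _ = False"

fun prods :: "val \<Rightarrow> (nat list \<times> nat) multiset" where
  "prods (Prod i r) = {#(i, r)#}"
| "prods (Plus a b) = prods a + prods b"
| "prods _ = {#}"

definition idx_space :: "nat list \<Rightarrow> nat list set" where
  "idx_space dims = {i. length i = length dims \<and> (\<forall>k<length dims. i ! k < dims ! k)}"

text \<open>t is a correct value of the output entry B^(n)(j,r): a sum tree (any bracketing)
containing each product of that output exactly once.\<close>
definition computes_output :: "nat list \<Rightarrow> nat \<Rightarrow> nat \<Rightarrow> nat \<Rightarrow> val \<Rightarrow> bool" where
  "computes_output dims n j r t \<longleftrightarrow>
     pure_sum t \<and> prods t = mset_set ((\<lambda>i. (i, r)) ` {i \<in> idx_space dims. i ! n = j})"

datatype instr =
    Send nat val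
  | Recv val
  | Mult "nat list" nat
  | Add val val
  | Del val

definition is_comm :: "instr \<Rightarrow> bool" where
  "is_comm ins \<longleftrightarrow> (case ins of Send _ _ \<Rightarrow> True | Recv _ \<Rightarrow> True | _ \<Rightarrow> False)"

text \<open>Global state: local memories, and the set of (destination, value) messages sent so far.
A parallel execution is modelled as an interleaving of events (processor, instruction).\<close>
type_synonym state = "(nat \<Rightarrow> val set) \<times> (nat \<times> val) set"

fun step :: "nat list \<Rightarrow> nat \<Rightarrow> nat \<Rightarrow> nat \<Rightarrow> state \<Rightarrow> nat \<times> instr \<Rightarrow> state option" where
  "step dims R n P (mem, sent) (p, Send q v) =
     (if p < P \<and> q < P \<and> v \<in> mem p then Some (mem, insert (q, v) sent) else None)"
| "step dims R n P (mem, sent) (p, Recv v) =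
     (if p < P \<and> (p, v) \<in> sent then Some (mem(p := insert v (mem p)), sent) else None)"
| "step dims R n P (mem, sent) (p, Mult i r) =
     (if p < P \<and> i \<in> idx_space dims \<and> r < R \<and> XIn i \<in> mem p
         \<and> (\<forall>k<length dims. k \<noteq> n \<longrightarrow> AIn k (i ! k) r \<in> mem p)
      then Some (mem(p := insert (Prod i r) (mem p)), sent) else None)"
| "step dims R n P (mem, sent) (p, Add a b) =
     (if p < P \<and> a \<in> mem p \<and> b \<in> mem p \<and> \<not> is_input a \<and> \<not> is_input b
      then Some (mem(p := insert (Plus a b) (mem p)), sent) else None)"
| "step dims R n P (mem, sent) (p, Del v) =
     (if p < P then Some (mem(p := mem p - {v}), sent) else None)"

definition mem_ok :: "nat \<Rightarrow> nat \<Rightarrow> (nat \<Rightarrow> val set) \<Rightarrow> bool" where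
  "mem_ok P M mem \<longleftrightarrow> (\<forall>p<P. finite (mem p) \<and> card (mem p) \<le> M)"

fun run :: "nat list \<Rightarrow> nat \<Rightarrow> nat \<Rightarrow> nat \<Rightarrow> nat \<Rightarrow> state \<Rightarrow> (nat \<times> instr) list \<Rightarrow> state option" where
  "run dims R n P M s [] = Some s"
| "run dims R n P M s (e # es) =
     (case step dims R n P s e of
        None \<Rightarrow> None
      | Some s' \<Rightarrow> if mem_ok P M (fst s') then run dims R n P M s' es else None)"

definition is_mttkrp_alg ::
  "nat list \<Rightarrow> nat \<Rightarrow> nat \<Rightarrow> nat \<Rightarrow> nat \<Rightarrow> (nat \<Rightarrow> val set) \<Rightarrow> (nat \<times> instr) list \<Rightarrow> bool" where
  "is_mttkrp_alg dims R n P M mem0 es \<longleftrightarrow>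
     mem_ok P M mem0 \<and> (\<forall>p<P. \<forall>v\<in>mem0 p. is_input v) \<and>
     (\<exists>s. run dims R n P M (mem0, {}) es = Some s \<and>
          (\<forall>j<dims ! n. \<forall>r<R. \<exists>p<P. \<exists>t\<in>fst s p. computes_output dims n j r t))"

definition comm_count :: "(nat \<times> instr) list \<Rightarrow> nat \<Rightarrow> nat" where
  "comm_count es p = length (filter (\<lambda>(q, ins). q = p \<and> is_comm ins) es)"

end

theory Submission
  imports Defs "HOL-Analysis.Convex"
begin

text \<open>Cut the communications of each processor into blocks of \<open>M\<close> consecutive sends and
  receives. Since no algebraic laws hold, a product computed in a block can reach the output only
  inside a partial sum of its own output entry, which at the end of the block is either still in
  the processor's memory or has been sent. Hence the inputs used in the block lie among the at most
  \<open>M\<close> values held at its start and the at most \<open>M\<close> received, the output entries it contributes to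
  are determined by the at most \<open>M\<close> values held at its end and the at most \<open>M\<close> sent, and these
  \<open>3M\<close> values bound the multiplies of the block by \<open>(3M)\<^bsup>2-1/N\<^esup>/N\<close>: for each column \<open>r\<close>, the
  multiplies are at most the number of tensor entries and at most the product of the numbers of
  entries of the \<open>N\<close> matrices, so by AM-GM at most \<open>|X|\<^bsup>1-1/N\<^esup>\<close> times the mean. A processor
  performing at least \<open>IR/P\<close> multiplies therefore needs many blocks.\<close>

section \<open>Counting iteration points\<close>

definition nth_product :: "nat \<Rightarrow> (nat \<Rightarrow> 'a set) \<Rightarrow> 'a list set" where
  "nth_product N S = {i. length i = N \<and> (\<forall>k<N. i ! k \<in> S k)}"

lemma bij_betw_nth_product_PiE:
  "bij_betw (\<lambda>i. restrict ((!) i) {..<N}) (nth_product N S) (PiE {..<N} S)"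
proof (rule bij_betwI')
  fix i j assume "i \<in> nth_product N S" "j \<in> nth_product N S"
  then show "(restrict ((!) i) {..<N} = restrict ((!) j) {..<N}) = (i = j)"
    by (auto simp: nth_product_def restrict_def fun_eq_iff intro: nth_equalityI)
next
  fix i assume "i \<in> nth_product N S"
  then show "restrict ((!) i) {..<N} \<in> PiE {..<N} S"
    by (simp add: nth_product_def)
next
  fix g assume "g \<in> PiE {..<N} S"
  then show "\<exists>i\<in>nth_product N S. g = restrict ((!) i) {..<N}"
    by (intro bexI[of _ "map g [0..<N]"])
       (auto simp: nth_product_def PiE_iff extensional_def restrict_def fun_eq_iff)
qed

lemma card_nth_product: "card (nth_product N S) = (\<Prod>k<N. card (S k))"
  using bij_betw_same_card[OF bij_betw_nth_product_PiE] by (simp add: card_PiE)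

lemma finite_nth_product:
  assumes "\<And>k. k < N \<Longrightarrow> finite (S k)"
  shows "finite (nth_product N S)"
proof -
  have "finite (PiE {..<N} S)"
    using assms by (intro finite_PiE) auto
  then show ?thesis
    using bij_betw_finite[OF bij_betw_nth_product_PiE] by blast
qed

lemma idx_space_eq_nth_product: "idx_space dims = nth_product (length dims) (\<lambda>k. {..<dims ! k})"
  by (simp add: idx_space_def nth_product_def)

lemma finite_idx_space: "finite (idx_space dims)"
  by (simp add: idx_space_eq_nth_product finite_nth_product)

lemma card_idx_space: "card (idx_space dims) = prod_list dims"
  by (simp add: idx_space_eq_nth_product card_nth_product prod.list_conv_set_nth atLeast0LessThan)

lemma le_powr_interpolate:
  fixes g x y \<theta> :: real
  assumes "0 \<le> g" "g \<le> x" "g \<le> y" "0 \<le> \<theta>" "\<theta> \<le> 1"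
  shows "g \<le> x powr (1 - \<theta>) * y powr \<theta>"
proof (cases "g = 0")
  case False
  then have "g = g powr (1 - \<theta>) * g powr \<theta>"
    using assms(1) by (simp flip: powr_add)
  also have "\<dots> \<le> x powr (1 - \<theta>) * y powr \<theta>"
    using assms by (intro mult_mono powr_mono2) auto
  finally show ?thesis .
qed simp

lemma powr_mult_le_powr_of_add_le:
  fixes x y c \<theta> :: real
  assumes "0 \<le> x" "0 \<le> y" "x + y \<le> c" "0 \<le> \<theta>"
  shows "x powr \<theta> * y \<le> c powr (1 + \<theta>)"
proof -
  have "x powr \<theta> * y \<le> c powr \<theta> * c"
    using assms by (intro mult_mono powr_mono2) auto
  also have "\<dots> = c powr (1 + \<theta>)"
    using assms by (cases "c = 0") (simp_all add: powr_add)
  finally show ?thesis .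
qed

lemma card_subset_nth_product_le:
  fixes G X :: "'a list set" and S :: "nat \<Rightarrow> 'a set"
  assumes "N \<ge> 1" "finite X" "\<And>k. k < N \<Longrightarrow> finite (S k)" "G \<subseteq> X \<inter> nth_product N S"
  shows "real (card G) \<le> real (card X) powr (1 - 1 / N) * ((\<Sum>k<N. real (card (S k))) / N)"
proof -
  have "card G \<le> card X" and "card G \<le> card (nth_product N S)"
    using assms by (auto intro: card_mono finite_nth_product)
  then have "real (card G) \<le> real (card X) powr (1 - 1 / N) * (\<Prod>k<N. real (card (S k))) powr (1 / N)"
    using assms(1) by (intro le_powr_interpolate) (auto simp: card_nth_product simp flip: of_nat_prod)
  also have "(\<Prod>k<N. real (card (S k))) powr (1 / N) \<le> (\<Sum>k<N. real (card (S k))) / N"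
    using arith_geom_mean[of "{..<N}" "\<lambda>k. real (card (S k))"] assms(1)
    by (simp add: sum_divide_distrib lessThan_empty_iff)
  finally show ?thesis by (simp add: mult_left_mono)
qed

lemma finite_slice: "finite C \<Longrightarrow> finite {c. (c, r) \<in> C}"
  using finite_vimageI[of C "\<lambda>c. (c, r)"] by (simp add: inj_on_def vimage_def)

lemma sum_card_slices_le:
  assumes "finite C"
  shows "(\<Sum>r\<in>Rs. card {c. (c, r) \<in> C}) \<le> card C"
proof (cases "finite Rs")
  case True
  have "(\<Sum>r\<in>Rs. card {c. (c, r) \<in> C}) = (\<Sum>r\<in>Rs. card ((\<lambda>c. (c, r)) ` {c. (c, r) \<in> C}))"
    by (simp add: card_image inj_on_def)
  also have "\<dots> = card (\<Union>r\<in>Rs. (\<lambda>c. (c, r)) ` {c. (c, r) \<in> C})"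
    using True assms by (intro card_UN_disjoint[symmetric]) (auto simp: finite_slice)
  also have "\<dots> \<le> card C"
    using assms by (intro card_mono) auto
  finally show ?thesis .
qed simp

lemma card_iteration_set_le:
  fixes G :: "('a list \<times> nat) set" and C :: "nat \<Rightarrow> ('a \<times> nat) set"
  assumes "N \<ge> 1" "finite X" "\<And>k. k < N \<Longrightarrow> finite (C k)"
    and G: "G \<subseteq> {(i, r). r < R \<and> i \<in> X \<inter> nth_product N (\<lambda>k. {c. (c, r) \<in> C k})}"
  shows "real (card G) \<le> real (card X) powr (1 - 1 / N) * (\<Sum>k<N. real (card (C k))) / N"
proof -
  define slice where "slice r = {i. (i, r) \<in> G}" for r
  have slice_finite: "finite (slice r)" for r
    using G assms(2) by (auto simp: slice_def intro: finite_subset)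
  have "G \<subseteq> (\<Union>r<R. (\<lambda>i. (i, r)) ` slice r)"
    using G by (auto simp: slice_def)
  then have "card G \<le> (\<Sum>r<R. card ((\<lambda>i. (i, r)) ` slice r))"
    using slice_finite by (intro order_trans[OF card_mono card_UN_le]) auto
  also have "\<dots> \<le> (\<Sum>r<R. card (slice r))"
    by (intro sum_mono card_image_le slice_finite)
  finally have "real (card G) \<le> (\<Sum>r<R. real (card (slice r)))"
    by (simp flip: of_nat_sum)
  also have "\<dots> \<le> (\<Sum>r<R. real (card X) powr (1 - 1 / N)
                        * ((\<Sum>k<N. real (card {c. (c, r) \<in> C k})) / N))"
    using G assms(1-3)
    by (intro sum_mono card_subset_nth_product_le) (auto simp: slice_def slice_finite finite_slice)
  also have "\<dots> = real (card X) powr (1 - 1 / N) * (\<Sum>k<N. \<Sum>r<R. real (card {c. (c, r) \<in> C k})) / N"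
    by (simp add: sum_distrib_left sum_divide_distrib sum.swap[of _ "{..<R}"])
  also have "\<dots> \<le> real (card X) powr (1 - 1 / N) * (\<Sum>k<N. real (card (C k))) / N"
    using assms(3) sum_card_slices_le
    by (intro divide_right_mono mult_left_mono sum_mono) (auto simp flip: of_nat_sum)
  finally show ?thesis .
qed

section \<open>Executions\<close>

lemma step_mem_cases:
  assumes "step dims R n P s (p, ins) = Some s'" "v \<in> fst s' q"
  shows "v \<in> fst s q \<or> q = p \<and> (ins = Recv v \<and> (q, v) \<in> snd s
           \<or> (\<exists>i r. ins = Mult i r \<and> v = Prod i r)
           \<or> (\<exists>a b. ins = Add a b \<and> v = Plus a b \<and> a \<in> fst s q \<and> b \<in> fst s q))"
  using assms by (cases s; cases ins) (auto split: if_splits)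

lemma step_sent_cases:
  assumes "step dims R n P s (p, ins) = Some s'" "(q, v) \<in> snd s'"
  shows "(q, v) \<in> snd s \<or> ins = Send q v \<and> v \<in> fst s p"
  using assms by (cases s; cases ins) (auto split: if_splits)

lemma step_proc_less: "step dims R n P s (p, ins) = Some s' \<Longrightarrow> p < P"
  by (cases s; cases ins) (auto split: if_splits)

lemma step_Mult_enabled:
  assumes "step dims R n P s (p, Mult i r) = Some s'"
  shows "i \<in> idx_space dims \<and> r < R \<and> XIn i \<in> fst s p
         \<and> (\<forall>k<length dims. k \<noteq> n \<longrightarrow> AIn k (i ! k) r \<in> fst s p)"
  using assms by (cases s) (auto split: if_splits)

lemma run_Some_trace:
  "run dims R n P M s0 es = Some s \<Longrightarrow> \<exists>f. f 0 = s0 \<and> f (length es) = s \<and>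
     (\<forall>\<tau><length es. step dims R n P (f \<tau>) (es ! \<tau>) = Some (f (Suc \<tau>)) \<and> mem_ok P M (fst (f (Suc \<tau>))))"
proof (induction es arbitrary: s0)
  case Nil
  then show ?case by auto
next
  case (Cons e es)
  then obtain s' where s': "step dims R n P s0 e = Some s'" "mem_ok P M (fst s')"
      "run dims R n P M s' es = Some s"
    by (auto split: option.splits if_splits)
  from Cons.IH[OF s'(3)] obtain f where "f 0 = s'" "f (length es) = s"
      "\<forall>\<tau><length es. step dims R n P (f \<tau>) (es ! \<tau>) = Some (f (Suc \<tau>)) \<and> mem_ok P M (fst (f (Suc \<tau>)))"
    by blast
  with s' show ?case
    by (intro exI[of _ "\<lambda>\<tau>. if \<tau> = 0 then s0 else f (\<tau> - 1)"]) (auto simp: nth_Cons split: nat.split)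
qed

locale execution =
  fixes dims :: "nat list" and R n P M :: nat
    and es :: "(nat \<times> instr) list" and f :: "nat \<Rightarrow> state"
  assumes trace_step: "\<And>\<tau>. \<tau> < length es \<Longrightarrow> step dims R n P (f \<tau>) (es ! \<tau>) = Some (f (Suc \<tau>))"
    and trace_mem_ok: "\<And>\<tau>. \<tau> \<le> length es \<Longrightarrow> mem_ok P M (fst (f \<tau>))"
    and initial_inputs: "\<And>p v. p < P \<Longrightarrow> v \<in> fst (f 0) p \<Longrightarrow> is_input v"
    and initially_unsent: "snd (f 0) = {}"

locale mttkrp_execution = execution +
  assumes outputs_held: "\<And>j r. j < dims ! n \<Longrightarrow> r < R \<Longrightarrow>
    \<exists>p<P. \<exists>t\<in>fst (f (length es)) p. computes_output dims n j r t"

lemma is_mttkrp_alg_execution: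
  assumes "is_mttkrp_alg dims R n P M mem0 es"
  obtains f where "mttkrp_execution dims R n P M es f"
proof -
  from assms obtain s where mem0: "mem_ok P M mem0" "\<forall>p<P. \<forall>v\<in>mem0 p. is_input v"
    and run: "run dims R n P M (mem0, {}) es = Some s"
    and out: "\<forall>j<dims ! n. \<forall>r<R. \<exists>p<P. \<exists>t\<in>fst s p. computes_output dims n j r t"
    unfolding is_mttkrp_alg_def by blast
  from run_Some_trace[OF run] obtain f where f: "f 0 = (mem0, {})" "f (length es) = s"
      "\<forall>\<tau><length es. step dims R n P (f \<tau>) (es ! \<tau>) = Some (f (Suc \<tau>)) \<and> mem_ok P M (fst (f (Suc \<tau>)))"
    by blast
  have "mem_ok P M (fst (f \<tau>))" if "\<tau> \<le> length es" for \<tau>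
    using f mem0 that by (cases \<tau>) auto
  with f mem0 out have "mttkrp_execution dims R n P M es f"
    by unfold_locales auto
  then show thesis by (rule that)
qed

section \<open>Tracing products back to their multiply\<close>

definition part_of :: "val \<Rightarrow> val \<Rightarrow> bool" where
  "part_of v w \<longleftrightarrow> prods w \<subseteq># prods v"

lemma part_of_refl [simp]: "part_of v v"
  by (simp add: part_of_def)

lemma pure_sum_not_input: "pure_sum v \<Longrightarrow> \<not> is_input v"
  by (cases v) auto

context execution
begin

lemma input_held_since:
  assumes "is_input v" "a \<le> t" "t \<le> length es" "v \<in> fst (f t) p"
  shows "v \<in> fst (f a) p \<or> (\<exists>\<tau>. a \<le> \<tau> \<and> \<tau> < t \<and> es ! \<tau> = (p, Recv v))"
  using assms(2-4)
proof (induction t)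
  case (Suc t)
  obtain p0 ins where e: "es ! t = (p0, ins)" by fastforce
  have "step dims R n P (f t) (p0, ins) = Some (f (Suc t))"
    using trace_step[of t] Suc.prems e by simp
  from step_mem_cases[OF this Suc.prems(3)] assms(1)
  have "v \<in> fst (f t) p \<or> es ! t = (p, Recv v)"
    using e by auto
  moreover have "a = Suc t \<or> a \<le> t"
    using Suc.prems(1) by linarith
  ultimately show ?case
    using Suc.IH Suc.prems less_SucI by (metis Suc_leD lessI)
qed simp

lemma sent_message_origin:
  assumes "\<tau> \<le> length es" "(q, v) \<in> snd (f \<tau>)"
  shows "\<exists>t<\<tau>. \<exists>p. es ! t = (p, Send q v) \<and> v \<in> fst (f t) p"
  using assms
proof (induction \<tau>)
  case (Suc t)
  obtain p0 ins where e: "es ! t = (p0, ins)" by fastforce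
  have "step dims R n P (f t) (p0, ins) = Some (f (Suc t))"
    using trace_step[of t] Suc.prems e by simp
  from step_sent_cases[OF this Suc.prems(2)]
  have "(q, v) \<in> snd (f t) \<or> es ! t = (p0, Send q v) \<and> v \<in> fst (f t) p0"
    using e by auto
  then show ?case
    using Suc.IH Suc.prems(1) less_SucI by (metis Suc_leD lessI)
qed (simp add: initially_unsent)

definition held :: "(val \<Rightarrow> bool) \<Rightarrow> nat list \<times> nat \<Rightarrow> nat \<Rightarrow> nat \<Rightarrow> bool" where
  "held V x p \<tau> \<longleftrightarrow> (\<exists>w\<in>fst (f \<tau>) p. V w \<and> x \<in># prods w)"

definition shipped :: "(val \<Rightarrow> bool) \<Rightarrow> nat list \<times> nat \<Rightarrow> nat \<Rightarrow> nat \<Rightarrow> nat \<Rightarrow> bool" where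
  "shipped V x p t \<tau> \<longleftrightarrow> (\<exists>t'. t \<le> t' \<and> t' < \<tau> \<and> (\<exists>q w. es ! t' = (p, Send q w) \<and> V w \<and> x \<in># prods w))"

text \<open>Processors may delete values, so after the multiply at step \<open>t\<close> the product need not stay in
  \<open>p\<close>'s memory; what persists is that \<open>p\<close> still holds it inside a \<open>V\<close>-value or has sent one away.\<close>
definition traced :: "(val \<Rightarrow> bool) \<Rightarrow> nat list \<times> nat \<Rightarrow> nat \<Rightarrow> nat \<Rightarrow> nat \<Rightarrow> bool" where
  "traced V x p t \<tau> \<longleftrightarrow> t < \<tau> \<and> es ! t = (p, Mult (fst x) (snd x)) \<and>
     (\<forall>\<tau>'. t < \<tau>' \<longrightarrow> \<tau>' \<le> \<tau> \<longrightarrow> held V x p \<tau>' \<or> shipped V x p t \<tau>')"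

lemma shipped_mono: "V \<le> V' \<Longrightarrow> \<tau> \<le> \<tau>' \<Longrightarrow> shipped V x p t \<tau> \<Longrightarrow> shipped V' x p t \<tau>'"
  unfolding shipped_def by (meson order_less_le_trans predicate1D)

lemma traced_mono: "V \<le> V' \<Longrightarrow> traced V x p t \<tau> \<Longrightarrow> traced V' x p t \<tau>"
  unfolding traced_def held_def using shipped_mono[of V V' \<tau>' \<tau>' x p t for \<tau>'] by (auto 0 3)

lemma traced_Suc:
  assumes "traced V x p t \<tau>" "q \<noteq> p \<longrightarrow> shipped V x p t \<tau>"
    and "v \<in> fst (f (Suc \<tau>)) q" "V v" "x \<in># prods v"
  shows "traced V x p t (Suc \<tau>) \<and> (q \<noteq> p \<longrightarrow> shipped V x p t (Suc \<tau>))"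
proof -
  have shipped_Suc: "q \<noteq> p \<longrightarrow> shipped V x p t (Suc \<tau>)"
    using assms(2) shipped_mono[of V V \<tau> "Suc \<tau>"] by simp
  moreover have "held V x p (Suc \<tau>) \<or> shipped V x p t (Suc \<tau>)"
    using assms(3-5) shipped_Suc by (cases "q = p") (auto simp: held_def)
  ultimately show ?thesis
    using assms(1) by (auto simp: traced_def le_Suc_eq)
qed

lemma traced_after_shipped:
  assumes "traced V x p t \<tau>" "shipped V x p t (Suc \<tau>)" "\<tau> < \<tau>'"
  shows "traced V x p t \<tau>' \<and> shipped V x p t \<tau>'"
proof -
  have "shipped V x p t \<tau>''" if "\<tau> < \<tau>''" for \<tau>''
    using shipped_mono[of V V "Suc \<tau>" \<tau>''] assms(2) that by simp
  moreover have "held V x p \<tau>'' \<or> shipped V x p t \<tau>''" if "t < \<tau>''" "\<tau>'' \<le> \<tau>" for \<tau>''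
    using assms(1) that by (simp add: traced_def)
  ultimately show ?thesis
    using assms(1,3) unfolding traced_def by (meson not_le less_trans)
qed

lemma traced_proc_less:
  assumes "traced V x p t \<tau>" "\<tau> \<le> length es"
  shows "p < P"
proof -
  from assms have "t < length es" "es ! t = (p, Mult (fst x) (snd x))"
    by (auto simp: traced_def)
  with trace_step[of t] show ?thesis
    by (auto intro: step_proc_less)
qed

lemma product_traced:
  assumes "\<tau> \<le> length es" "q < P" "v \<in> fst (f \<tau>) q" "pure_sum v" "x \<in># prods v"
  shows "\<exists>t p. traced (part_of v) x p t \<tau> \<and> (q \<noteq> p \<longrightarrow> shipped (part_of v) x p t \<tau>)"
  using assms
proof (induction \<tau> arbitrary: q v rule: less_induct)
  case (less \<tau>)
  then obtain t0 where \<tau>: "\<tau> = Suc t0"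
    using initial_inputs by (cases \<tau>) (auto dest: pure_sum_not_input)
  obtain p0 ins where e: "es ! t0 = (p0, ins)" by fastforce
  have step: "step dims R n P (f t0) (p0, ins) = Some (f \<tau>)"
    using trace_step[of t0] less.prems \<tau> e by simp
  from step_mem_cases[OF step less.prems(3)]
  consider (old) "v \<in> fst (f t0) q"
    | (recv) "q = p0" "ins = Recv v" "(q, v) \<in> snd (f t0)"
    | (mult) i r where "q = p0" "ins = Mult i r" "v = Prod i r"
    | (add) a b where "q = p0" "ins = Add a b" "v = Plus a b" "a \<in> fst (f t0) q" "b \<in> fst (f t0) q"
    by blast
  then show ?case
  proof cases
    case old
    then obtain t p where "traced (part_of v) x p t t0" "q \<noteq> p \<longrightarrow> shipped (part_of v) x p t t0"
      using less.IH[of t0 q v] less.prems \<tau> by auto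
    from traced_Suc[OF this _ part_of_refl less.prems(5)] less.prems(3) \<tau> show ?thesis by blast
  next
    case recv
    then obtain t'' q'' where t'': "t'' < t0" "es ! t'' = (q'', Send q v)" "v \<in> fst (f t'') q''"
      using sent_message_origin[of t0 q v] less.prems \<tau> by auto
    have "q'' < P"
      using trace_step[of t''] step_proc_less t'' less.prems \<tau> by fastforce
    then obtain t p where tr: "traced (part_of v) x p t t''"
        "q'' \<noteq> p \<longrightarrow> shipped (part_of v) x p t t''"
      using less.IH[of t'' q'' v] less.prems t'' \<tau> by auto
    have "shipped (part_of v) x p t (Suc t'')"
    proof (cases "q'' = p")
      case True
      with tr(1) t''(2) less.prems(5) part_of_refl show ?thesis
        unfolding shipped_def by (intro exI[of _ t'']) (auto simp: traced_def)
    next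
      case False
      with tr(2) shipped_mono[of "part_of v" "part_of v" t'' "Suc t''"] show ?thesis by simp
    qed
    from traced_after_shipped[OF tr(1) this, of \<tau>] t''(1) \<tau> show ?thesis by auto
  next
    case (mult i r)
    with less.prems e \<tau> have "traced (part_of v) x q t0 \<tau>"
      by (auto simp: traced_def held_def le_Suc_eq intro!: bexI[of _ "Prod i r"])
    then show ?thesis by blast
  next
    case (add a b)
    then obtain w where w: "w \<in> fst (f t0) q" "part_of v w" "pure_sum w" "x \<in># prods w"
      using less.prems by (auto simp: part_of_def)
    then obtain t p where "traced (part_of w) x p t t0" "q \<noteq> p \<longrightarrow> shipped (part_of w) x p t t0"
      using less.IH[of t0 q w] less.prems \<tau> by auto
    moreover have "part_of w \<le> part_of v"
      using w(2) by (auto simp: part_of_def)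
    ultimately have "traced (part_of v) x p t t0" "q \<noteq> p \<longrightarrow> shipped (part_of v) x p t t0"
      using traced_mono[of "part_of w"] shipped_mono[of "part_of w" _ t0 t0] by auto
    from traced_Suc[OF this _ part_of_refl less.prems(5)] less.prems(3) \<tau> show ?thesis by blast
  qed
qed

end

definition out_key :: "nat \<Rightarrow> nat list \<times> nat \<Rightarrow> nat \<times> nat" where
  "out_key n x = (fst x ! n, snd x)"

definition partial_sum :: "nat \<Rightarrow> nat \<times> nat \<Rightarrow> val \<Rightarrow> bool" where
  "partial_sum n jr w \<longleftrightarrow> (\<forall>y\<in>#prods w. out_key n y = jr)"

text \<open>Meaningful only for a partial sum containing some product (otherwise \<open>SOME\<close> picks junk).\<close>
definition val_key :: "nat \<Rightarrow> val \<Rightarrow> nat \<times> nat" where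
  "val_key n w = out_key n (SOME y. y \<in># prods w)"

lemma val_key_eq: "x \<in># prods w \<Longrightarrow> partial_sum n jr w \<Longrightarrow> val_key n w = jr"
  unfolding val_key_def partial_sum_def by (metis someI)

lemma (in mttkrp_execution) iteration_point_traced:
  assumes "n < length dims" "x \<in> idx_space dims \<times> {..<R}"
  obtains t p where "traced (partial_sum n (out_key n x)) x p t (length es)"
proof -
  obtain i r where x: "x = (i, r)" "i \<in> idx_space dims" "r < R"
    using assms(2) by auto
  then have "i ! n < dims ! n"
    using assms(1) by (simp add: idx_space_def)
  with outputs_held x(3) obtain q v where q: "q < P" "v \<in> fst (f (length es)) q"
      "computes_output dims n (i ! n) r v"
    by blast
  have "finite {i' \<in> idx_space dims. i' ! n = i ! n}"
    by (simp add: finite_idx_space)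
  with q(3) x have v: "pure_sum v" "x \<in># prods v" "part_of v \<le> partial_sum n (out_key n x)"
    by (auto simp: computes_output_def part_of_def partial_sum_def out_key_def dest!: mset_subset_eqD)
  from product_traced[OF order_refl q(1,2) v(1,2)] obtain t p
    where "traced (part_of v) x p t (length es)"
    by blast
  with traced_mono[OF v(3)] that show thesis
    by blast
qed

section \<open>Communication windows\<close>

definition comm_by :: "nat \<Rightarrow> nat \<times> instr \<Rightarrow> bool" where
  "comm_by p = (\<lambda>(q, ins). q = p \<and> is_comm ins)"

context execution
begin

definition received :: "nat \<Rightarrow> nat \<Rightarrow> nat \<Rightarrow> val set" where
  "received p a b = {v. \<exists>\<tau>. a \<le> \<tau> \<and> \<tau> < b \<and> es ! \<tau> = (p, Recv v)}"

definition sent_values :: "nat \<Rightarrow> nat \<Rightarrow> nat \<Rightarrow> val set" where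
  "sent_values p a b = {v. \<exists>\<tau> q. a \<le> \<tau> \<and> \<tau> < b \<and> es ! \<tau> = (p, Send q v)}"

lemma card_received_sent_le:
  "finite (received p a b) \<and> finite (sent_values p a b) \<and>
   card (received p a b) + card (sent_values p a b) \<le> card {\<tau>. a \<le> \<tau> \<and> \<tau> < b \<and> comm_by p (es ! \<tau>)}"
proof -
  define payload where
    "payload \<tau> = (case snd (es ! \<tau>) of Send q v \<Rightarrow> v | Recv v \<Rightarrow> v | _ \<Rightarrow> undefined)" for \<tau>
  define TR where "TR = {\<tau>. a \<le> \<tau> \<and> \<tau> < b \<and> (\<exists>v. es ! \<tau> = (p, Recv v))}"
  define TS where "TS = {\<tau>. a \<le> \<tau> \<and> \<tau> < b \<and> (\<exists>q v. es ! \<tau> = (p, Send q v))}"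
  have TR_TS: "finite TR" "finite TS" "TR \<inter> TS = {}"
      "TR \<union> TS \<subseteq> {\<tau>. a \<le> \<tau> \<and> \<tau> < b \<and> comm_by p (es ! \<tau>)}"
    by (auto simp: TR_def TS_def comm_by_def is_comm_def)
  have "received p a b \<subseteq> payload ` TR" "sent_values p a b \<subseteq> payload ` TS"
    by (force simp: received_def sent_values_def TR_def TS_def payload_def)+
  then have "finite (received p a b)" "finite (sent_values p a b)"
      "card (received p a b) + card (sent_values p a b) \<le> card TR + card TS"
    using TR_TS by (auto intro: finite_subset add_mono surj_card_le)
  moreover have "card TR + card TS \<le> card {\<tau>. a \<le> \<tau> \<and> \<tau> < b \<and> comm_by p (es ! \<tau>)}"
    using TR_TS by (simp add: card_Un_disjoint[symmetric] card_mono)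
  ultimately show ?thesis
    by simp
qed

lemma window_card_le:
  assumes "p < P" "a \<le> b" "b \<le> length es"
    and "card {\<tau>. a \<le> \<tau> \<and> \<tau> < b \<and> comm_by p (es ! \<tau>)} \<le> M"
  shows "finite (fst (f a) p \<union> received p a b)" "finite (fst (f b) p \<union> sent_values p a b)"
    "card (fst (f a) p \<union> received p a b) + card (fst (f b) p \<union> sent_values p a b) \<le> 3 * M"
proof -
  have mem: "finite (fst (f \<tau>) p) \<and> card (fst (f \<tau>) p) \<le> M" if "\<tau> \<le> length es" for \<tau>
    using trace_mem_ok[OF that] assms(1) by (simp add: mem_ok_def)
  then show "finite (fst (f a) p \<union> received p a b)" "finite (fst (f b) p \<union> sent_values p a b)"
    using assms card_received_sent_le by auto
  have "card (fst (f a) p \<union> received p a b) + card (fst (f b) p \<union> sent_values p a b)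
        \<le> card (fst (f a) p) + card (fst (f b) p) + (card (received p a b) + card (sent_values p a b))"
    using card_Un_le[of "fst (f a) p" "received p a b"] card_Un_le[of "fst (f b) p" "sent_values p a b"]
    by linarith
  also have "\<dots> \<le> 3 * M"
    using mem[of a] mem[of b] assms card_received_sent_le[of p a b] by linarith
  finally show "card (fst (f a) p \<union> received p a b) + card (fst (f b) p \<union> sent_values p a b) \<le> 3 * M" .
qed

lemma input_in_window:
  assumes "is_input v" "v \<in> fst (f t) p" "a \<le> t" "t \<le> b" "b \<le> length es"
  shows "v \<in> fst (f a) p \<union> received p a b"
  using input_held_since[OF assms(1,3) _ assms(2)] assms(4,5) by (force simp: received_def)

lemma traced_multiply_in_window:
  assumes "a \<le> t" "t < b" "b \<le> length es"
    and "traced (partial_sum n (out_key n (i, r))) (i, r) p t (length es)"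
  shows "i \<in> idx_space dims" "r < R" "XIn i \<in> fst (f a) p \<union> received p a b"
    "\<And>k. k < length dims \<Longrightarrow> k \<noteq> n \<Longrightarrow> AIn k (i ! k) r \<in> fst (f a) p \<union> received p a b"
    "(i ! n, r) \<in> val_key n ` (fst (f b) p \<union> sent_values p a b)"
proof -
  have t: "t < length es" "es ! t = (p, Mult i r)"
    using assms by (auto simp: traced_def)
  then have "step dims R n P (f t) (p, Mult i r) = Some (f (Suc t))"
    using trace_step[of t] by simp
  note enabled = step_Mult_enabled[OF this]
  then show "i \<in> idx_space dims" "r < R"
    by simp_all
  show "XIn i \<in> fst (f a) p \<union> received p a b"
    using enabled assms(1-3) by (intro input_in_window[of _ t]) auto
  show "AIn k (i ! k) r \<in> fst (f a) p \<union> received p a b" if "k < length dims" "k \<noteq> n" for k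
    using enabled assms(1-3) that by (intro input_in_window[of _ t]) auto
  have "held (partial_sum n (i ! n, r)) (i, r) p b \<or> shipped (partial_sum n (i ! n, r)) (i, r) p t b"
    using assms by (auto simp: traced_def out_key_def)
  then obtain w where "w \<in> fst (f b) p \<union> sent_values p a b" "partial_sum n (i ! n, r) w" "(i, r) \<in># prods w"
    using assms(1) unfolding held_def shipped_def sent_values_def by fastforce
  then show "(i ! n, r) \<in> val_key n ` (fst (f b) p \<union> sent_values p a b)"
    by (metis image_eqI val_key_eq)
qed

end

lemma card_input_preimages_le:
  assumes "finite V" "finite K"
  shows "card (XIn -` V) + (\<Sum>k\<in>K. card ((\<lambda>(c, r). AIn k c r) -` V)) \<le> card V"
proof -
  define A where "A k = (\<lambda>(c, r). AIn k c r)" for k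
  have card_vimage: "card (g -` V) = card (V \<inter> range g)" if "inj g" for g :: "'a \<Rightarrow> val"
    using card_vimage_inj[OF that, of "V \<inter> range g"] by (simp add: vimage_def)
  have "card (XIn -` V) + (\<Sum>k\<in>K. card (A k -` V))
        = card (V \<inter> range XIn) + (\<Sum>k\<in>K. card (V \<inter> range (A k)))"
    by (simp add: card_vimage inj_def A_def)
  also have "(\<Sum>k\<in>K. card (V \<inter> range (A k))) = card (\<Union>k\<in>K. V \<inter> range (A k))"
    using assms by (intro card_UN_disjoint[symmetric]) (auto simp: A_def)
  also have "card (V \<inter> range XIn) + \<dots> = card ((V \<inter> range XIn) \<union> (\<Union>k\<in>K. V \<inter> range (A k)))"
    using assms by (intro card_Un_disjoint[symmetric]) (auto simp: A_def)
  also have "\<dots> \<le> card V"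
    using assms(1) by (intro card_mono) auto
  finally show ?thesis
    by (simp add: A_def)
qed

lemma (in execution) card_multiplies_in_window_le:
  assumes "p < P" "n < length dims" "a \<le> b" "b \<le> length es"
    and "card {\<tau>. a \<le> \<tau> \<and> \<tau> < b \<and> comm_by p (es ! \<tau>)} \<le> M"
    and Gs: "\<And>x. x \<in> Gs \<Longrightarrow>
      a \<le> tm x \<and> tm x < b \<and> traced (partial_sum n (out_key n x)) x p (tm x) (length es)"
  shows "real (card Gs) \<le> (3 * real M) powr (2 - 1 / length dims) / length dims"
proof -
  define N where "N = length dims"
  define In where "In = fst (f a) p \<union> received p a b"
  define Out where "Out = fst (f b) p \<union> sent_values p a b"
  define X where "X = XIn -` In"
  define C where "C k = (if k = n then val_key n ` Out else (\<lambda>(c, r). AIn k c r) -` In)" for k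
  have budget: "finite In" "finite Out" "card In + card Out \<le> 3 * M"
    using window_card_le[OF assms(1,3-5)] by (simp_all add: In_def Out_def)
  have fin: "finite X" "finite (C k)" for k
    using budget by (auto simp: X_def C_def inj_on_def intro: finite_vimageI)
  have "Gs \<subseteq> {(i, r). r < R \<and> i \<in> X \<inter> nth_product N (\<lambda>k. {c. (c, r) \<in> C k})}"
  proof
    fix x assume x: "x \<in> Gs"
    obtain i r where ir: "x = (i, r)" by fastforce
    note window = traced_multiply_in_window[of a "tm x" b i r p]
    show "x \<in> {(i, r). r < R \<and> i \<in> X \<inter> nth_product N (\<lambda>k. {c. (c, r) \<in> C k})}"
      using window Gs[OF x] assms(2,4)
      by (auto simp: ir X_def C_def In_def Out_def nth_product_def N_def idx_space_def)
  qed
  then have "real (card Gs) \<le> real (card X) powr (1 - 1 / N) * (\<Sum>k<N. real (card (C k))) / N"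
    using fin assms(2) by (intro card_iteration_set_le) (auto simp: N_def)
  also have "\<dots> \<le> (3 * real M) powr (1 + (1 - 1 / N)) / N"
  proof -
    have "(\<Sum>k<N. card (C k)) = card (C n) + (\<Sum>k\<in>{..<N} - {n}. card (C k))"
      using assms(2) by (simp add: N_def sum.remove)
    also have "\<dots> = card (val_key n ` Out) + (\<Sum>k\<in>{..<N} - {n}. card ((\<lambda>(c, r). AIn k c r) -` In))"
      by (simp add: C_def)
    finally have "card X + (\<Sum>k<N. card (C k)) \<le> card In + card Out"
      using card_input_preimages_le[OF budget(1), of "{..<N} - {n}"] card_image_le[OF budget(2), of "val_key n"]
      by (simp add: X_def)
    then have "real (card X) + (\<Sum>k<N. real (card (C k))) \<le> 3 * real M"
      using budget(3) by (simp flip: of_nat_sum)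
    then show ?thesis
      using assms(2) by (intro divide_right_mono powr_mult_le_powr_of_add_le) (auto simp: N_def sum_nonneg divide_le_eq_1)
  qed
  finally show ?thesis
    by (simp add: N_def)
qed

section \<open>Blocks of \<open>M\<close> communications\<close>

definition comms_before :: "(nat \<times> instr) list \<Rightarrow> nat \<Rightarrow> nat \<Rightarrow> nat" where
  "comms_before es p \<tau> = length (filter (comm_by p) (take \<tau> es))"

lemma mono_comms_before: "mono (comms_before es p)"
proof
  fix \<tau>1 \<tau>2 :: nat assume "\<tau>1 \<le> \<tau>2"
  then obtain d where "\<tau>2 = \<tau>1 + d"
    using le_Suc_ex by blast
  then show "comms_before es p \<tau>1 \<le> comms_before es p \<tau>2"
    by (simp add: comms_before_def take_add)
qed

lemma comms_before_Suc:
  "\<tau> < length es \<Longrightarrow>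
   comms_before es p (Suc \<tau>) = comms_before es p \<tau> + (if comm_by p (es ! \<tau>) then 1 else 0)"
  by (simp add: comms_before_def take_Suc_conv_app_nth)

lemma comms_before_length: "comms_before es p (length es) = comm_count es p"
  by (simp add: comms_before_def comm_count_def comm_by_def)

lemma card_comms_in_block_le:
  assumes "M > 0"
  shows "card {\<tau>. \<tau> < length es \<and> comm_by p (es ! \<tau>) \<and> comms_before es p \<tau> div M = s} \<le> M"
proof -
  let ?T = "{\<tau>. \<tau> < length es \<and> comm_by p (es ! \<tau>) \<and> comms_before es p \<tau> div M = s}"
  have "strict_mono_on ?T (comms_before es p)"
  proof (rule strict_mono_onI)
    fix \<tau>1 \<tau>2 assume "\<tau>1 \<in> ?T" "\<tau>1 < \<tau>2"
    then show "comms_before es p \<tau>1 < comms_before es p \<tau>2"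
      using comms_before_Suc[of \<tau>1 es p] monoD[OF mono_comms_before[of es p], of "Suc \<tau>1" \<tau>2] by simp
  qed
  then have "card ?T = card (comms_before es p ` ?T)"
    by (simp add: card_image strict_mono_on_imp_inj_on)
  also have "\<dots> \<le> card {s * M..<s * M + M}"
  proof (intro card_mono)
    have "c \<in> {s * M..<s * M + M}" if "c div M = s" for c
      using div_mult_mod_eq[of c M] mod_less_divisor[OF assms, of c] that by auto
    then show "comms_before es p ` ?T \<subseteq> {s * M..<s * M + M}"
      by auto
  qed simp
  finally show ?thesis
    by simp
qed

lemma mono_level_set_interval:
  fixes g :: "nat \<Rightarrow> 'a::order"
  assumes "mono g" "\<tau>0 \<le> L" "g \<tau>0 = s"
  obtains a b where "{\<tau>. \<tau> \<le> L \<and> g \<tau> = s} = {a..b}"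
proof -
  let ?S = "{\<tau>. \<tau> \<le> L \<and> g \<tau> = s}"
  have S: "finite ?S" "?S \<noteq> {}"
    using assms by auto
  have "?S = {Min ?S..Max ?S}"
  proof
    show "{Min ?S..Max ?S} \<subseteq> ?S"
    proof
      fix \<tau> assume "\<tau> \<in> {Min ?S..Max ?S}"
      moreover have "Min ?S \<in> ?S" "Max ?S \<in> ?S"
        by (rule Min_in[OF S], rule Max_in[OF S])
      ultimately show "\<tau> \<in> ?S"
        using monoD[OF assms(1), of "Min ?S" \<tau>] monoD[OF assms(1), of \<tau> "Max ?S"] by auto
    qed
  qed (use S in auto)
  then show thesis
    by (rule that)
qed

context execution
begin

lemma card_block_multiplies_le:
  assumes "p < P" "M > 0" "n < length dims"
    and Gs: "\<And>x. x \<in> Gs \<Longrightarrow>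
      traced (partial_sum n (out_key n x)) x p (tm x) (length es) \<and> comms_before es p (tm x) div M = s"
  shows "real (card Gs) \<le> (3 * real M) powr (2 - 1 / length dims) / length dims"
proof (cases "Gs = {}")
  case False
  define block where "block \<tau> = comms_before es p \<tau> div M" for \<tau>
  have "mono block"
    using mono_comms_before[of es p] by (auto simp: block_def mono_def div_le_mono)
  obtain x0 where "x0 \<in> Gs"
    using False by blast
  then have "tm x0 \<le> length es" "block (tm x0) = s"
    using Gs[of x0] by (auto simp: block_def traced_def)
  then obtain a b where level_eq: "{\<tau>. \<tau> \<le> length es \<and> block \<tau> = s} = {a..b}"
    using mono_level_set_interval[OF \<open>mono block\<close>] by blast
  have level: "\<tau> \<in> {a..b} \<longleftrightarrow> \<tau> \<le> length es \<and> block \<tau> = s" for \<tau>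
    unfolding level_eq[symmetric] by simp
  have window: "a \<le> tm x \<and> tm x < b" if "x \<in> Gs" for x
  proof -
    from Gs[OF that] have "tm x < length es" "es ! tm x = (p, Mult (fst x) (snd x))" "block (tm x) = s"
      by (auto simp: traced_def block_def)
    moreover from this have "block (Suc (tm x)) = s"
      using comms_before_Suc[of "tm x" es p] by (simp add: block_def comm_by_def is_comm_def)
    ultimately show ?thesis
      using level[of "tm x"] level[of "Suc (tm x)"] by simp
  qed
  have ab: "a \<le> b" "b \<le> length es"
    using window[OF \<open>x0 \<in> Gs\<close>] level[of b] by auto
  have "comms_before es p \<tau> div M = s" if "a \<le> \<tau>" "\<tau> \<le> b" for \<tau>
    using level[of \<tau>] that by (simp add: block_def)
  then have "{\<tau>. a \<le> \<tau> \<and> \<tau> < b \<and> comm_by p (es ! \<tau>)}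
      \<subseteq> {\<tau>. \<tau> < length es \<and> comm_by p (es ! \<tau>) \<and> comms_before es p \<tau> div M = s}"
    using ab(2) by auto
  then have "card {\<tau>. a \<le> \<tau> \<and> \<tau> < b \<and> comm_by p (es ! \<tau>)}
      \<le> card {\<tau>. \<tau> < length es \<and> comm_by p (es ! \<tau>) \<and> comms_before es p \<tau> div M = s}"
    by (rule card_mono[rotated]) simp
  also have "\<dots> \<le> M"
    by (rule card_comms_in_block_le[OF assms(2)])
  finally have comms: "card {\<tau>. a \<le> \<tau> \<and> \<tau> < b \<and> comm_by p (es ! \<tau>)} \<le> M" .
  show ?thesis
    by (rule card_multiplies_in_window_le[OF assms(1,3) ab comms, of Gs tm]) (use Gs window in blast)
qed simp

lemma card_traced_multiplies_le:
  assumes "p < P" "M > 0" "n < length dims"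
    and G: "\<And>x. x \<in> G \<Longrightarrow> traced (partial_sum n (out_key n x)) x p (tm x) (length es)"
  shows "real (card G) \<le> (real (comm_count es p div M) + 1)
                          * ((3 * real M) powr (2 - 1 / length dims) / length dims)"
proof -
  define D where "D = comm_count es p div M"
  define block where "block s = {x \<in> G. comms_before es p (tm x) div M = s}" for s
  have "comms_before es p (tm x) div M \<le> D" if "x \<in> G" for x
    using G[OF that] monoD[OF mono_comms_before[of es p], of "tm x" "length es"]
    by (auto simp: D_def traced_def comms_before_length div_le_mono)
  then have "G = (\<Union>s\<le>D. block s)"
    by (auto simp: block_def)
  then have "card G \<le> (\<Sum>s\<le>D. card (block s))"
    using card_UN_le[of "{..D}" block] by simp
  then have "real (card G) \<le> (\<Sum>s\<le>D. real (card (block s)))"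
    by (simp flip: of_nat_sum)
  also have "\<dots> \<le> (\<Sum>s\<le>D. (3 * real M) powr (2 - 1 / length dims) / length dims)"
    using G by (intro sum_mono card_block_multiplies_le[OF assms(1-3)]) (auto simp: block_def)
  finally show ?thesis
    by (simp add: D_def add.commute)
qed

end

lemma pigeonhole_fiber:
  assumes "finite A" "A \<noteq> {}" "\<And>x. x \<in> A \<Longrightarrow> h x < P"
  shows "\<exists>p<P. card A \<le> P * card {x \<in> A. h x = p}"
proof (rule ccontr)
  assume "\<not> ?thesis"
  then have less: "P * card {x \<in> A. h x = p} < card A" if "p < P" for p
    using that by (simp add: not_le)
  have "P > 0"
    using assms by fastforce
  have A_eq: "A = (\<Union>p<P. {x \<in> A. h x = p})"
    using assms(3) by auto
  have "card (\<Union>p<P. {x \<in> A. h x = p}) = (\<Sum>p<P. card {x \<in> A. h x = p})"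
    using assms(1) by (intro card_UN_disjoint) auto
  then have "card A = (\<Sum>p<P. card {x \<in> A. h x = p})"
    by (simp only: A_eq[symmetric])
  then have "P * card A = (\<Sum>p<P. P * card {x \<in> A. h x = p})"
    by (simp add: sum_distrib_left)
  also have "\<dots> < (\<Sum>p<P. card A)"
    using \<open>P > 0\<close> less by (intro sum_strict_mono) auto
  finally show False
    by simp
qed

lemma comm_lower_bound_arith:
  fixes I g D C M P N :: real
  assumes "M > 0" "P > 0" "N \<ge> 1" "I \<le> P * g"
    and "g \<le> (D + 1) * ((3 * M) powr (2 - 1 / N) / N)" "D \<le> C / M"
  shows "1 / 3 powr (2 - 1 / N) * (N * I) / (P * M powr (1 - 1 / N)) - M \<le> C"
proof -
  define \<alpha> where "\<alpha> = 3 powr (2 - 1 / N)"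
  define \<beta> where "\<beta> = M powr (1 - 1 / N)"
  have pos: "\<alpha> > 0" "\<beta> > 0"
    using assms(1) by (simp_all add: \<alpha>_def \<beta>_def)
  have "M powr (2 - 1 / N) = \<beta> * M"
    using powr_add[of M "1 - 1 / N" 1] assms(1) by (simp add: \<beta>_def)
  then have "(3 * M) powr (2 - 1 / N) = \<alpha> * \<beta> * M"
    using assms(1) by (simp add: \<alpha>_def powr_mult)
  with assms(5) have "g \<le> (D + 1) * (\<alpha> * \<beta> * M / N)"
    by simp
  also have "\<dots> \<le> (C / M + 1) * (\<alpha> * \<beta> * M / N)"
    using assms(1,3,6) pos by (intro mult_right_mono) auto
  finally have "I \<le> P * ((C / M + 1) * (\<alpha> * \<beta> * M / N))"
    using assms(2,4) by (meson mult_left_mono order_trans less_imp_le)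
  also have "\<dots> = P * (C + M) * \<alpha> * \<beta> / N"
    using assms(1,3) by (simp add: field_simps)
  finally have "1 / \<alpha> * (N * I) / (P * \<beta>) \<le> C + M"
    using assms(2,3) pos by (simp add: field_simps)
  from this[unfolded \<alpha>_def \<beta>_def] show ?thesis
    by linarith
qed

theorem (in mttkrp_execution) comm_lower_bound:
  assumes "n < length dims" "\<forall>k<length dims. dims ! k \<ge> 1" "R \<ge> 1"
  shows "\<exists>p<P. real (comm_count es p) \<ge>
           1 / 3 powr (2 - 1 / real (length dims))
             * (real (length dims) * real (prod_list dims) * real R)
             / (real P * real M powr (1 - 1 / real (length dims)))
           - real M"
proof -
  define Pts where "Pts = idx_space dims \<times> {..<R}"
  have "\<forall>x\<in>Pts. \<exists>t p. traced (partial_sum n (out_key n x)) x p t (length es)"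
    using iteration_point_traced[OF assms(1)] by (metis Pts_def)
  then obtain tm where tm: "\<And>x. x \<in> Pts \<Longrightarrow> \<exists>p. traced (partial_sum n (out_key n x)) x p (tm x) (length es)"
    by metis
  define owner where "owner x = fst (es ! tm x)" for x
  have owned: "traced (partial_sum n (out_key n x)) x (owner x) (tm x) (length es)" if x: "x \<in> Pts" for x
  proof -
    obtain p where "traced (partial_sum n (out_key n x)) x p (tm x) (length es)"
      using tm[OF x] by blast
    moreover from this have "owner x = p"
      by (simp add: owner_def traced_def)
    ultimately show ?thesis
      by simp
  qed
  have owner_less: "owner x < P" if "x \<in> Pts" for x
    using traced_proc_less[OF owned[OF that]] by simp
  have "replicate (length dims) 0 \<in> idx_space dims"
    using assms(2) by (auto simp: idx_space_def)
  then have "Pts \<noteq> {}" "finite Pts" "card Pts = prod_list dims * R"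
    using assms(3) by (auto simp: Pts_def finite_idx_space card_idx_space card_cartesian_product lessThan_empty_iff)
  then obtain p where p: "p < P" "card Pts \<le> P * card {x \<in> Pts. owner x = p}"
    using pigeonhole_fiber[of Pts owner P] owner_less by blast
  show ?thesis
  proof (cases "M = 0")
    case False
    have "real (card {x \<in> Pts. owner x = p}) \<le> (real (comm_count es p div M) + 1)
             * ((3 * real M) powr (2 - 1 / length dims) / length dims)"
      using owned False by (intro card_traced_multiplies_le[OF p(1) _ assms(1)]) auto
    then have "1 / 3 powr (2 - 1 / real (length dims))
             * (real (length dims) * (real (prod_list dims) * real R))
             / (real P * real M powr (1 - 1 / real (length dims))) - real M \<le> real (comm_count es p)"
      using p \<open>card Pts = prod_list dims * R\<close> False assms(1)
      by (intro comm_lower_bound_arith[where g = "real (card {x \<in> Pts. owner x = p})"])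
         (auto simp: of_nat_div_le_of_nat simp flip: of_nat_mult)
    with p(1) show ?thesis
      by (auto simp: mult.assoc)
  qed (use p in auto) \<comment> \<open>for \<open>M = 0\<close> the bound is \<open>0\<close>, as \<open>0 powr _ = 0\<close> and \<open>_ / 0 = 0\<close>\<close>
qed

theorem corollary1:
  fixes dims :: "nat list" and R n P M :: nat
    and mem0 :: "nat \<Rightarrow> val set" and es :: "(nat \<times> instr) list"
  assumes "length dims \<ge> 2"
    and "\<forall>k<length dims. dims ! k \<ge> 1"
    and "R \<ge> 1"
    and "n < length dims"
    and "is_mttkrp_alg dims R n P M mem0 es"
  shows "\<exists>p<P. real (comm_count es p) \<ge>
           1 / 3 powr (2 - 1 / real (length dims))
             * (real (length dims) * real (prod_list dims) * real R)
             / (real P * real M powr (1 - 1 / real (length dims)))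
           - real M"
proof -
  obtain f where "mttkrp_execution dims R n P M es f"
    using assms(5) by (rule is_mttkrp_alg_execution)
  from mttkrp_execution.comm_lower_bound[OF this assms(4,2,3)] show ?thesis .
qed

end
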